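(* Let $G=(V,E)$ be a temporal network with nonnegative timestamps, let $\pi$ be an ordering of $V$, and let $\delta\ge 0$. Let $e=(u,v,t)\in E$ with $\pi(u)<\pi(v)$, and let $w\in N^{-}_{\pi}(u)\cap N(v)$. Put $L_2=E_{u,w}$ and $L_3=E_{v,w}$, and for $f\in L_2$ let $L_{23}[f]$ be the first edge of $L_3$ (in sorted order) whose timestamp is at least $t(f)$. Define the collection of intervals $$I_{w,u,v}=\big\{\,[\max\{0,\,t(L_{23}[f])-\delta\},\ t(f)]\ :\ f\in L_2,\ L_{23}[f]\text{ exists},\ t(f)\le t(L_{23}[f])\le t(f)+\delta\,\big\}.$$ Then $e$ forms at least one $\delta$-temporal triangle with $w$ if and only if some interval in $I_{w,u,v}$ contains $t=t(e)$.
   Context: A temporal network $G=(V,E)$ is a finite multiset of temporal edges $(x,y,t)$ with $x\neq y\in V$ and timestamp $t=t(e)$ (from $x$ to $y$; parallel edges in both directions allowed). For distinct $x,y$, $E_{x,y}$ is the list of temporal edges from $x$ to $y$ sorted by increasing timestamp. $G_S$ is the simple undirected graph on $V$ with $\{x,y\}$ an edge iff some temporal edge joins $x$ and $y$; $N(x)$ is the neighbourhood of $x$ in $G_S$. For an ordering $\pi$ of $V$, $N^{-}_{\pi}(x)=\{y\in N(x):\pi(y)<\pi(x)\}$. For $\delta\ge 0$, a temporal edge $e=(a,b,t)$ forms a $\delta$-temporal triangle with a vertex $c$ if there exist temporal edges $(a,c,t_2)$ and $(b,c,t_3)$ in $E$ with $t\le t_2\le t_3\le t+\delta$. *)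

theory Defs
  imports Complex_Main "HOL-Library.Multiset"
begin

type_synonym 'v tedge = "'v \<times> 'v \<times> real"

definition src :: "'v tedge \<Rightarrow> 'v" where "src e = fst e"
definition dst :: "'v tedge \<Rightarrow> 'v" where "dst e = fst (snd e)"
definition tstamp :: "'v tedge \<Rightarrow> real" where "tstamp e = snd (snd e)"

definition temporal_network :: "'v set \<Rightarrow> 'v tedge multiset \<Rightarrow> bool" where
  "temporal_network V E \<longleftrightarrow> finite V \<and>
     (\<forall>e \<in># E. src e \<in> V \<and> dst e \<in> V \<and> src e \<noteq> dst e)"

definition edge_list :: "'v tedge multiset \<Rightarrow> 'v \<Rightarrow> 'v \<Rightarrow> 'v tedge list" where
  "edge_list E x y = (SOME xs. mset xs = filter_mset (\<lambda>e. src e = x \<and> dst e = y) E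
                               \<and> sorted (map tstamp xs))"

definition nbhd :: "'v tedge multiset \<Rightarrow> 'v \<Rightarrow> 'v set" where
  "nbhd E x = {y. \<exists>e \<in># E. (src e = x \<and> dst e = y) \<or> (src e = y \<and> dst e = x)}"

definition lower_nbhd :: "'v tedge multiset \<Rightarrow> ('v \<Rightarrow> nat) \<Rightarrow> 'v \<Rightarrow> 'v set" where
  "lower_nbhd E \<pi> x = {y \<in> nbhd E x. \<pi> y < \<pi> x}"

definition forms_triangle :: "'v tedge multiset \<Rightarrow> real \<Rightarrow> 'v tedge \<Rightarrow> 'v \<Rightarrow> bool" where
  "forms_triangle E \<delta> e c \<longleftrightarrow> (\<exists>t2 t3. (src e, c, t2) \<in># E \<and> (dst e, c, t3) \<in># E \<and>
      tstamp e \<le> t2 \<and> t2 \<le> t3 \<and> t3 \<le> tstamp e + \<delta>)"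

definition first_after :: "'v tedge list \<Rightarrow> 'v tedge \<Rightarrow> 'v tedge option" where
  "first_after L3 f = find (\<lambda>g. tstamp g \<ge> tstamp f) L3"

definition interval_collection ::
  "'v tedge multiset \<Rightarrow> real \<Rightarrow> 'v \<Rightarrow> 'v \<Rightarrow> 'v \<Rightarrow> real set set" where
  "interval_collection E \<delta> w u v =
     (let L2 = edge_list E u w; L3 = edge_list E v w in
      {{max 0 (tstamp g - \<delta>) .. tstamp f} | f g.
         f \<in> set L2 \<and> first_after L3 f = Some g \<and>
         tstamp f \<le> tstamp g \<and> tstamp g \<le> tstamp f + \<delta>})"

end

theory Submission
  imports Defs
begin

text \<open>An edge (u, v, t) forms a triangle with w iff there are f in L2 and g in L3 with
t \<le> t(f) \<le> t(g) \<le> t + \<delta>. For a fixed f, replacing g by the earliest edge of L3 not before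
t(f), namely L23[f], only weakens the last constraint, so it suffices to look at the pairs
(f, L23[f]); for those the two remaining constraints on t say exactly that t lies in the
interval [t(L23[f]) - \<delta>, t(f)]. The lower bound 0 is harmless as timestamps are nonnegative.\<close>

lemma edge_list_spec:
  "mset (edge_list E x y) = filter_mset (\<lambda>e. src e = x \<and> dst e = y) E
   \<and> sorted (map tstamp (edge_list E x y))"
proof -
  obtain xs where xs: "mset xs = filter_mset (\<lambda>e. src e = x \<and> dst e = y) E"
    using ex_mset by blast
  have "mset (sort_key tstamp xs) = filter_mset (\<lambda>e. src e = x \<and> dst e = y) E
        \<and> sorted (map tstamp (sort_key tstamp xs))"
    using xs by (simp add: sorted_sort_key)
  then show ?thesis unfolding edge_list_def by (rule someI)
qed

lemma sorted_edge_list: "sorted (map tstamp (edge_list E x y))"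
  using edge_list_spec[of E x y] by blast

lemma in_set_edge_list: "e \<in> set (edge_list E x y) \<longleftrightarrow> e \<in># E \<and> src e = x \<and> dst e = y"
proof -
  have "e \<in> set (edge_list E x y) \<longleftrightarrow> e \<in># mset (edge_list E x y)" by simp
  then show ?thesis using edge_list_spec[of E x y] by simp
qed

lemma src_conv: "src (x, y, t) = x"
  and dst_conv: "dst (x, y, t) = y"
  and tstamp_conv: "tstamp (x, y, t) = t"
  by (simp_all add: src_def dst_def tstamp_def)

lemma tedge_eq: "e = (src e, dst e, tstamp e)"
  by (simp add: src_def dst_def tstamp_def)

lemma forms_triangle_iff_edge_lists:
  "forms_triangle E \<delta> e c \<longleftrightarrow>
   (\<exists>f \<in> set (edge_list E (src e) c). \<exists>g \<in> set (edge_list E (dst e) c).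
      tstamp e \<le> tstamp f \<and> tstamp f \<le> tstamp g \<and> tstamp g \<le> tstamp e + \<delta>)"
    (is "_ \<longleftrightarrow> ?pair")
proof
  assume "forms_triangle E \<delta> e c"
  then obtain t2 t3 where "(src e, c, t2) \<in># E" "(dst e, c, t3) \<in># E"
      "tstamp e \<le> t2" "t2 \<le> t3" "t3 \<le> tstamp e + \<delta>"
    unfolding forms_triangle_def by blast
  then show ?pair
    by (intro bexI[of _ "(src e, c, t2)"] bexI[of _ "(dst e, c, t3)"])
      (simp_all add: in_set_edge_list src_conv dst_conv tstamp_conv)
next
  assume ?pair
  then obtain f g where f: "f \<in># E" "src f = src e" "dst f = c"
      and g: "g \<in># E" "src g = dst e" "dst g = c"
      and "tstamp e \<le> tstamp f" "tstamp f \<le> tstamp g" "tstamp g \<le> tstamp e + \<delta>"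
    by (auto simp: in_set_edge_list)
  moreover have "(src e, c, tstamp f) \<in># E" "(dst e, c, tstamp g) \<in># E"
    using f g tedge_eq[of f] tedge_eq[of g] by simp_all
  ultimately show "forms_triangle E \<delta> e c"
    unfolding forms_triangle_def by blast
qed

lemma first_after_SomeD:
  assumes "first_after L f = Some g"
  shows "g \<in> set L" and "tstamp f \<le> tstamp g"
  using assms unfolding first_after_def by (auto simp: find_Some_iff)

lemma first_after_le:
  assumes "sorted (map tstamp L)" and "g' \<in> set L" and "tstamp f \<le> tstamp g'"
  obtains g where "first_after L f = Some g" and "tstamp g \<le> tstamp g'"
proof -
  have "find (\<lambda>g. tstamp f \<le> tstamp g) L \<noteq> None"
    using assms(2,3) unfolding find_None_iff by blast
  then obtain g where g: "first_after L f = Some g"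
    unfolding first_after_def by blast
  then obtain i where i: "i < length L" "g = L ! i" and before: "\<forall>j<i. tstamp (L ! j) < tstamp f"
    unfolding first_after_def find_Some_iff by (auto simp: not_le)
  obtain k where k: "k < length L" "g' = L ! k"
    using assms(2) by (auto simp: in_set_conv_nth)
  have "i \<le> k"
    using before k assms(3) by (meson not_le)
  then have "map tstamp L ! i \<le> map tstamp L ! k"
    using assms(1) k(1) by (intro sorted_nth_mono) auto
  with g i k show thesis by (intro that) simp_all
qed

lemma exists_first_after_window_iff:
  assumes "sorted (map tstamp L3)" and "0 \<le> t"
  shows "(\<exists>f \<in> set L2. \<exists>g. first_after L3 f = Some g \<and> tstamp g \<le> tstamp f + \<delta>
            \<and> max 0 (tstamp g - \<delta>) \<le> t \<and> t \<le> tstamp f)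
         \<longleftrightarrow> (\<exists>f \<in> set L2. \<exists>g \<in> set L3. t \<le> tstamp f \<and> tstamp f \<le> tstamp g \<and> tstamp g \<le> t + \<delta>)"
proof
  assume "\<exists>f \<in> set L2. \<exists>g. first_after L3 f = Some g \<and> tstamp g \<le> tstamp f + \<delta>
            \<and> max 0 (tstamp g - \<delta>) \<le> t \<and> t \<le> tstamp f"
  then show "\<exists>f \<in> set L2. \<exists>g \<in> set L3. t \<le> tstamp f \<and> tstamp f \<le> tstamp g \<and> tstamp g \<le> t + \<delta>"
  proof (elim bexE exE conjE)
    fix f g
    assume "f \<in> set L2" "first_after L3 f = Some g" "tstamp g \<le> tstamp f + \<delta>"
      "max 0 (tstamp g - \<delta>) \<le> t" "t \<le> tstamp f"
    then show ?thesis
      using first_after_SomeD[of L3 f g] by force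
  qed
next
  assume "\<exists>f \<in> set L2. \<exists>g \<in> set L3. t \<le> tstamp f \<and> tstamp f \<le> tstamp g \<and> tstamp g \<le> t + \<delta>"
  then obtain f g' where f: "f \<in> set L2" "t \<le> tstamp f"
      and g': "g' \<in> set L3" "tstamp f \<le> tstamp g'" "tstamp g' \<le> t + \<delta>"
    by blast
  obtain g where g: "first_after L3 f = Some g" "tstamp g \<le> tstamp g'"
    using first_after_le[OF assms(1) g'(1,2)] .
  have "tstamp g \<le> tstamp f + \<delta>" "max 0 (tstamp g - \<delta>) \<le> t"
    using f g' g(2) assms(2) by simp_all
  with f g(1) show "\<exists>f \<in> set L2. \<exists>g. first_after L3 f = Some g \<and> tstamp g \<le> tstamp f + \<delta>
            \<and> max 0 (tstamp g - \<delta>) \<le> t \<and> t \<le> tstamp f"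
    by blast
qed

lemma mem_interval_collection_iff:
  "(\<exists>I \<in> interval_collection E \<delta> w u v. t \<in> I) \<longleftrightarrow>
   (\<exists>f \<in> set (edge_list E u w). \<exists>g. first_after (edge_list E v w) f = Some g
      \<and> tstamp g \<le> tstamp f + \<delta> \<and> max 0 (tstamp g - \<delta>) \<le> t \<and> t \<le> tstamp f)"
    (is "_ \<longleftrightarrow> ?window")
proof
  assume "\<exists>I \<in> interval_collection E \<delta> w u v. t \<in> I"
  then obtain f g where "f \<in> set (edge_list E u w)" "first_after (edge_list E v w) f = Some g"
      "tstamp g \<le> tstamp f + \<delta>" "t \<in> {max 0 (tstamp g - \<delta>) .. tstamp f}"
    unfolding interval_collection_def Let_def by blast
  then show ?window
    unfolding atLeastAtMost_iff by blast
next
  assume ?window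
  then obtain f g where fg: "f \<in> set (edge_list E u w)" "first_after (edge_list E v w) f = Some g"
      "tstamp g \<le> tstamp f + \<delta>" "t \<in> {max 0 (tstamp g - \<delta>) .. tstamp f}"
    unfolding atLeastAtMost_iff by blast
  then have "{max 0 (tstamp g - \<delta>) .. tstamp f} \<in> interval_collection E \<delta> w u v"
    using first_after_SomeD(2)[OF fg(2)] unfolding interval_collection_def Let_def by blast
  with fg(4) show "\<exists>I \<in> interval_collection E \<delta> w u v. t \<in> I"
    by blast
qed

theorem theorem3p4:
  fixes V :: "'v set" and E :: "'v tedge multiset" and \<pi> :: "'v \<Rightarrow> nat"
    and \<delta> :: real and u v w :: 'v and t :: real
  assumes "temporal_network V E"
    and "\<forall>e \<in># E. tstamp e \<ge> 0"
    and "inj_on \<pi> V"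
    and "\<delta> \<ge> 0"
    and "(u, v, t) \<in># E"
    and "\<pi> u < \<pi> v"
    and "w \<in> lower_nbhd E \<pi> u \<inter> nbhd E v"
  shows "forms_triangle E \<delta> (u, v, t) w \<longleftrightarrow>
         (\<exists>I \<in> interval_collection E \<delta> w u v. t \<in> I)"
proof -
  have "0 \<le> t"
    using assms(2,5) tstamp_conv[of u v t] by metis
  have "forms_triangle E \<delta> (u, v, t) w \<longleftrightarrow>
        (\<exists>f \<in> set (edge_list E u w). \<exists>g \<in> set (edge_list E v w).
           t \<le> tstamp f \<and> tstamp f \<le> tstamp g \<and> tstamp g \<le> t + \<delta>)"
    using forms_triangle_iff_edge_lists[of E \<delta> "(u, v, t)" w]
    by (simp only: src_conv dst_conv tstamp_conv)
  also have "\<dots> \<longleftrightarrow> (\<exists>f \<in> set (edge_list E u w). \<exists>g. first_after (edge_list E v w) f = Some g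
      \<and> tstamp g \<le> tstamp f + \<delta> \<and> max 0 (tstamp g - \<delta>) \<le> t \<and> t \<le> tstamp f)"
    by (rule exists_first_after_window_iff[OF sorted_edge_list \<open>0 \<le> t\<close>, symmetric])
  also have "\<dots> \<longleftrightarrow> (\<exists>I \<in> interval_collection E \<delta> w u v. t \<in> I)"
    by (rule mem_interval_collection_iff[symmetric])
  finally show ?thesis .
qed

end
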